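(* Let $f \colon Q \twoheadrightarrow Q'$ be a partial surjection between finite sets. Then for every simple type $A$, $\mathrm{Reg}_{Q'}(A) \subseteq \mathrm{Reg}_Q(A)$ (as Boolean subalgebras of $\wp(\Lambda(A))$).
   Context: Simple types are generated from a base type $o$ by $\Rightarrow$; $\Lambda(A)$ is the set of closed simply typed $\lambda$-terms of type $A$ modulo $\beta\eta$. For a finite set $Q$: $[\![o]\!]_Q = Q$, $[\![A\Rightarrow B]\!]_Q$ = all functions $[\![A]\!]_Q \to [\![B]\!]_Q$, and $[\![M]\!]_Q \in [\![A]\!]_Q$ is the standard interpretation of $M$. $\mathrm{Reg}_Q(A) = \{\{M \in \Lambda(A) : [\![M]\!]_Q \in F\} : F \subseteq [\![A]\!]_Q\}$. A partial surjection $f \colon Q \twoheadrightarrow Q'$ is a relation that is the graph of a partial function surjective onto $Q'$. *)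

theory Defs
  imports Main "HOL-Library.FSet"
begin

datatype ty = Ob | Arr ty ty

datatype trm = Var nat | App trm trm | Lam ty trm

inductive typing :: "ty list \<Rightarrow> trm \<Rightarrow> ty \<Rightarrow> bool" where
  T_Var: "i < length G \<Longrightarrow> typing G (Var i) (G ! i)"
| T_App: "typing G s (Arr A B) \<Longrightarrow> typing G t A \<Longrightarrow> typing G (App s t) B"
| T_Lam: "typing (A # G) t B \<Longrightarrow> typing G (Lam A t) (Arr A B)"

definition closed_terms :: "ty \<Rightarrow> trm set" where
  "closed_terms A = {M. typing [] M A}"

text \<open>Semantic values: base elements, or functions given by their (finite) graph.\<close>
datatype 'q sem = Base 'q | Fn "('q sem \<times> 'q sem) fset"

text \<open>The full set-theoretic model: [[o]]_Q = Q, [[A => B]]_Q = all functions.\<close>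
fun sdom :: "'q set \<Rightarrow> ty \<Rightarrow> 'q sem set" where
  "sdom Q Ob = Base ` Q"
| "sdom Q (Arr A B) =
     {Fn g | g. \<exists>h. (\<forall>x\<in>sdom Q A. h x \<in> sdom Q B) \<and> fset g = (\<lambda>x. (x, h x)) ` sdom Q A}"

fun app :: "'q sem \<Rightarrow> 'q sem \<Rightarrow> 'q sem" where
  "app (Fn g) x = (THE y. (x, y) |\<in>| g)"
| "app (Base q) x = undefined"

fun eval :: "'q set \<Rightarrow> 'q sem list \<Rightarrow> trm \<Rightarrow> 'q sem" where
  "eval Q env (Var i) = env ! i"
| "eval Q env (App s t) = app (eval Q env s) (eval Q env t)"
| "eval Q env (Lam A t) = Fn (Abs_fset ((\<lambda>x. (x, eval Q (x # env) t)) ` sdom Q A))"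

definition interp :: "'q set \<Rightarrow> trm \<Rightarrow> 'q sem" where
  "interp Q M = eval Q [] M"

definition Reg :: "'q set \<Rightarrow> ty \<Rightarrow> trm set set" where
  "Reg Q A = {{M \<in> closed_terms A. interp Q M \<in> F} | F. F \<subseteq> sdom Q A}"

definition partial_surj :: "('a \<times> 'b) set \<Rightarrow> 'a set \<Rightarrow> 'b set \<Rightarrow> bool" where
  "partial_surj f Q Q' \<longleftrightarrow> f \<subseteq> Q \<times> Q' \<and> single_valued f \<and> Range f = Q'"

end

theory Submission
  imports Defs
begin

text \<open>
  The partial surjection \<open>f\<close> induces a logical relation \<open>R\<^sub>A \<subseteq> [[A]]\<^sub>Q \<times> [[A]]\<^sub>Q\<^sub>'\<close>:
  \<open>R\<^sub>o = f\<close>, and two functions are related at \<open>A \<Rightarrow> B\<close> when they map \<open>R\<^sub>A\<close>-related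
  arguments to \<open>R\<^sub>B\<close>-related results. By induction on types, every \<open>R\<^sub>A\<close> is again a
  partial surjection; at a function type a preimage of \<open>u'\<close> is obtained by choosing, at
  each argument \<open>x\<close> related to some \<open>x'\<close>, a preimage of \<open>u' x'\<close>. By the fundamental
  lemma of logical relations, \<open>[[M]]\<^sub>Q\<close> is related to \<open>[[M]]\<^sub>Q\<^sub>'\<close> for every closed \<open>M\<close>, so
  since \<open>R\<^sub>A\<close> is single-valued, the terms whose \<open>Q'\<close>-value lies in \<open>F'\<close> are exactly those
  whose \<open>Q\<close>-value lies in the preimage of \<open>F'\<close> under \<open>R\<^sub>A\<close>.
\<close>

lemma finite_sdom: "finite Q \<Longrightarrow> finite (sdom Q A)"
proof (induction A)
  case Ob
  then show ?case by simp
next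
  case (Arr A B)
  have "sdom Q (Arr A B) \<subseteq> (Fn \<circ> Abs_fset) ` Pow (sdom Q A \<times> sdom Q B)"
  proof
    fix u assume "u \<in> sdom Q (Arr A B)"
    then obtain g h where u: "u = Fn g" "\<forall>x\<in>sdom Q A. h x \<in> sdom Q B"
      "fset g = (\<lambda>x. (x, h x)) ` sdom Q A" by auto
    then have "fset g \<in> Pow (sdom Q A \<times> sdom Q B)" by auto
    moreover have "u = (Fn \<circ> Abs_fset) (fset g)" using u by (metis comp_apply fset_inverse)
    ultimately show "u \<in> (Fn \<circ> Abs_fset) ` Pow (sdom Q A \<times> sdom Q B)" by blast
  qed
  then show ?case using Arr by (meson finite_SigmaI finite_imageI finite_Pow_iff finite_subset)
qed

lemma app_Fn_graph:
  assumes "finite S" and "x \<in> S"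
  shows "app (Fn (Abs_fset ((\<lambda>x. (x, h x)) ` S))) x = h x"
proof -
  have "(x, y) |\<in>| Abs_fset ((\<lambda>x. (x, h x)) ` S) \<longleftrightarrow> y = h x" for y
    using assms by (auto simp: Abs_fset_inverse)
  then show ?thesis by simp
qed

lemma Fn_graph_in_sdom_Arr:
  assumes "finite Q" and "\<And>x. x \<in> sdom Q A \<Longrightarrow> h x \<in> sdom Q B"
  shows "Fn (Abs_fset ((\<lambda>x. (x, h x)) ` sdom Q A)) \<in> sdom Q (Arr A B)"
  using assms finite_sdom[OF assms(1), of A] by (auto simp: Abs_fset_inverse)

lemma sdom_Arr_graph:
  assumes "u \<in> sdom Q (Arr A B)"
  obtains g where "u = Fn g" and "fset g = (\<lambda>x. (x, app u x)) ` sdom Q A"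
    and "\<And>x. x \<in> sdom Q A \<Longrightarrow> app u x \<in> sdom Q B"
proof -
  obtain g h where u: "u = Fn g" "\<And>x. x \<in> sdom Q A \<Longrightarrow> h x \<in> sdom Q B"
    "fset g = (\<lambda>x. (x, h x)) ` sdom Q A" using assms by auto
  have "(x, y) |\<in>| g \<longleftrightarrow> y = h x" if "x \<in> sdom Q A" for x y
    using u(3) that by auto
  then have app_u: "app u x = h x" if "x \<in> sdom Q A" for x
    using that by (simp add: u(1))
  show ?thesis
  proof (rule that)
    show "u = Fn g" by (rule u(1))
    show "fset g = (\<lambda>x. (x, app u x)) ` sdom Q A" using u(3) app_u by simp
    show "app u x \<in> sdom Q B" if "x \<in> sdom Q A" for x using u(2) app_u that by simp
  qed
qed

lemma app_in_sdom:
  assumes "u \<in> sdom Q (Arr A B)" and "x \<in> sdom Q A"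
  shows "app u x \<in> sdom Q B"
  using assms by (elim sdom_Arr_graph) simp

lemma sdom_Arr_ext:
  assumes "u\<^sub>1 \<in> sdom Q (Arr A B)" and "u\<^sub>2 \<in> sdom Q (Arr A B)"
    and "\<And>x. x \<in> sdom Q A \<Longrightarrow> app u\<^sub>1 x = app u\<^sub>2 x"
  shows "u\<^sub>1 = u\<^sub>2"
proof -
  obtain g\<^sub>1 where g\<^sub>1: "u\<^sub>1 = Fn g\<^sub>1" "fset g\<^sub>1 = (\<lambda>x. (x, app u\<^sub>1 x)) ` sdom Q A"
    using assms(1) by (elim sdom_Arr_graph)
  obtain g\<^sub>2 where g\<^sub>2: "u\<^sub>2 = Fn g\<^sub>2" "fset g\<^sub>2 = (\<lambda>x. (x, app u\<^sub>2 x)) ` sdom Q A"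
    using assms(2) by (elim sdom_Arr_graph)
  have "fset g\<^sub>1 = fset g\<^sub>2"
    unfolding g\<^sub>1(2) g\<^sub>2(2) by (rule image_cong) (simp_all add: assms(3))
  then show ?thesis by (simp add: g\<^sub>1(1) g\<^sub>2(1) fset_inject)
qed

lemma sdom_Arr_eq_empty_iff:
  assumes "finite Q"
  shows "sdom Q (Arr A B) = {} \<longleftrightarrow> sdom Q A \<noteq> {} \<and> sdom Q B = {}"
proof
  assume empty: "sdom Q (Arr A B) = {}"
  show "sdom Q A \<noteq> {} \<and> sdom Q B = {}"
  proof (rule ccontr)
    assume "\<not> (sdom Q A \<noteq> {} \<and> sdom Q B = {})"
    then obtain y where "sdom Q A \<noteq> {} \<longrightarrow> y \<in> sdom Q B" by blast
    then show False using Fn_graph_in_sdom_Arr[OF assms, of A "\<lambda>_. y" B] empty by blast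
  qed
next
  assume "sdom Q A \<noteq> {} \<and> sdom Q B = {}"
  then show "sdom Q (Arr A B) = {}" using app_in_sdom by blast
qed

lemma sdom_nonempty: "finite Q \<Longrightarrow> Q \<noteq> {} \<Longrightarrow> sdom Q A \<noteq> {}"
  by (induction A) (simp_all only: sdom_Arr_eq_empty_iff, simp_all)

lemma sdom_emptyset_eq_empty_iff:
  "sdom ({} :: 'a set) A = {} \<longleftrightarrow> sdom ({} :: 'b set) A = {}"
  by (induction A) (simp_all only: sdom_Arr_eq_empty_iff[OF finite.emptyI], simp_all)

lemma eval_in_sdom:
  assumes "finite Q"
  shows "typing G M T \<Longrightarrow> length env = length G \<Longrightarrow>
    (\<And>i. i < length G \<Longrightarrow> env ! i \<in> sdom Q (G ! i)) \<Longrightarrow> eval Q env M \<in> sdom Q T"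
proof (induction G M T arbitrary: env rule: typing.induct)
  case (T_Var i G)
  then show ?case by simp
next
  case (T_App G s A B t)
  then have "eval Q env s \<in> sdom Q (Arr A B)" and "eval Q env t \<in> sdom Q A" by blast+
  then show ?case unfolding eval.simps by (rule app_in_sdom)
next
  case (T_Lam A G t B)
  have "eval Q (x # env) t \<in> sdom Q B" if "x \<in> sdom Q A" for x
    using T_Lam that by (intro T_Lam.IH) (auto simp: nth_Cons split: nat.splits)
  then show ?case using Fn_graph_in_sdom_Arr[OF assms] by simp
qed

lemma Collect_eq_Collect_converse_Image:
  assumes "single_valued R" and "\<And>M. M \<in> C \<Longrightarrow> (\<phi> M, \<psi> M) \<in> R"
  shows "{M \<in> C. \<psi> M \<in> F'} = {M \<in> C. \<phi> M \<in> R\<inverse> `` F'}"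
  using assms by (auto dest: single_valuedD)

locale partial_surjection =
  fixes Q :: "'a set" and Q' :: "'b set" and f :: "('a \<times> 'b) set"
  assumes finite: "finite Q" and finite': "finite Q'" and partial_surj: "partial_surj f Q Q'"
begin

fun logical_rel :: "ty \<Rightarrow> ('a sem \<times> 'b sem) set" where
  "logical_rel Ob = {(Base q, Base q') | q q'. (q, q') \<in> f}"
| "logical_rel (Arr A B) = {(u, u'). u \<in> sdom Q (Arr A B) \<and> u' \<in> sdom Q' (Arr A B) \<and>
      (\<forall>x x'. (x, x') \<in> logical_rel A \<longrightarrow> (app u x, app u' x') \<in> logical_rel B)}"

lemma sdom_nonempty_if_sdom'_nonempty: "sdom Q' A \<noteq> {} \<Longrightarrow> sdom Q A \<noteq> {}"
proof (cases "Q = {}")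
  case True
  then have "Q' = {}" using partial_surj unfolding partial_surj_def by auto
  with \<open>Q = {}\<close> show "sdom Q' A \<noteq> {} \<Longrightarrow> sdom Q A \<noteq> {}"
    using sdom_emptyset_eq_empty_iff by metis
qed (simp add: sdom_nonempty finite)

lemma partial_surj_logical_rel_Ob: "partial_surj (logical_rel Ob) (sdom Q Ob) (sdom Q' Ob)"
  using partial_surj unfolding partial_surj_def single_valued_def by (auto simp: image_iff)

lemma single_valued_logical_rel_Arr:
  assumes "sdom Q' A \<subseteq> Range (logical_rel A)" and "single_valued (logical_rel B)"
  shows "single_valued (logical_rel (Arr A B))"
proof (rule single_valuedI)
  fix u u\<^sub>1 u\<^sub>2
  assume rel\<^sub>1: "(u, u\<^sub>1) \<in> logical_rel (Arr A B)" and rel\<^sub>2: "(u, u\<^sub>2) \<in> logical_rel (Arr A B)"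
  have "app u\<^sub>1 x' = app u\<^sub>2 x'" if "x' \<in> sdom Q' A" for x'
  proof -
    obtain x where "(x, x') \<in> logical_rel A" using assms(1) \<open>x' \<in> sdom Q' A\<close> by blast
    then have "(app u x, app u\<^sub>1 x') \<in> logical_rel B" "(app u x, app u\<^sub>2 x') \<in> logical_rel B"
      using rel\<^sub>1 rel\<^sub>2 by auto
    then show ?thesis using assms(2) single_valuedD by metis
  qed
  then show "u\<^sub>1 = u\<^sub>2" using rel\<^sub>1 rel\<^sub>2 sdom_Arr_ext[of u\<^sub>1 Q' A B u\<^sub>2] by auto
qed

lemma sdom_Arr_subset_Range_logical_rel:
  assumes A: "partial_surj (logical_rel A) (sdom Q A) (sdom Q' A)"
    and B: "partial_surj (logical_rel B) (sdom Q B) (sdom Q' B)"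
  shows "sdom Q' (Arr A B) \<subseteq> Range (logical_rel (Arr A B))"
proof
  fix u' assume u': "u' \<in> sdom Q' (Arr A B)"
  define lifts where "lifts x y \<longleftrightarrow>
    y \<in> sdom Q B \<and> (\<forall>x'. (x, x') \<in> logical_rel A \<longrightarrow> (y, app u' x') \<in> logical_rel B)" for x y
  have "\<exists>y. lifts x y" if x: "x \<in> sdom Q A" for x
  proof (cases "x \<in> Domain (logical_rel A)")
    case True
    then obtain x' where xx': "(x, x') \<in> logical_rel A" by blast
    then have "app u' x' \<in> sdom Q' B" using A u' app_in_sdom unfolding partial_surj_def by blast
    then obtain y where "(y, app u' x') \<in> logical_rel B" using B unfolding partial_surj_def by blast
    moreover have "x'' = x'" if "(x, x'') \<in> logical_rel A" for x''
      using A xx' that unfolding partial_surj_def single_valued_def by blast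
    ultimately show ?thesis using B unfolding lifts_def partial_surj_def by blast
  next
    case False
    text \<open>Then any value of type \<open>B\<close> will do; one exists as \<open>[[A \<Rightarrow> B]]\<^sub>Q\<close> is inhabited.\<close>
    obtain u where "u \<in> sdom Q (Arr A B)" using u' sdom_nonempty_if_sdom'_nonempty by blast
    then have "app u x \<in> sdom Q B" using x app_in_sdom by blast
    then show ?thesis using False unfolding lifts_def by blast
  qed
  then have lift: "lifts x (SOME y. lifts x y)" if "x \<in> sdom Q A" for x
    using that by (blast intro: someI_ex)
  define u where "u = Fn (Abs_fset ((\<lambda>x. (x, SOME y. lifts x y)) ` sdom Q A))"
  have "u \<in> sdom Q (Arr A B)"
    unfolding u_def using lift lifts_def by (intro Fn_graph_in_sdom_Arr finite) blast
  moreover have "app u x = (SOME y. lifts x y)" if "x \<in> sdom Q A" for x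
    unfolding u_def using app_Fn_graph[OF finite_sdom[OF finite] that] .
  moreover have "x \<in> sdom Q A" if "(x, x') \<in> logical_rel A" for x x'
    using A that unfolding partial_surj_def by blast
  ultimately have "(u, u') \<in> logical_rel (Arr A B)"
    using u' lift unfolding lifts_def by auto
  then show "u' \<in> Range (logical_rel (Arr A B))" by blast
qed

lemma partial_surj_logical_rel: "partial_surj (logical_rel A) (sdom Q A) (sdom Q' A)"
proof (induction A)
  case Ob
  then show ?case by (rule partial_surj_logical_rel_Ob)
next
  case (Arr A B)
  have "logical_rel (Arr A B) \<subseteq> sdom Q (Arr A B) \<times> sdom Q' (Arr A B)" by auto
  moreover have "single_valued (logical_rel (Arr A B))"
    using Arr single_valued_logical_rel_Arr unfolding partial_surj_def by simp
  moreover have "sdom Q' (Arr A B) \<subseteq> Range (logical_rel (Arr A B))"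
    using Arr by (rule sdom_Arr_subset_Range_logical_rel)
  ultimately show ?case unfolding partial_surj_def by blast
qed

lemma logical_rel_subset: "logical_rel A \<subseteq> sdom Q A \<times> sdom Q' A"
  using partial_surj_logical_rel unfolding partial_surj_def by blast

lemma eval_logical_rel:
  "typing G M T \<Longrightarrow> length env = length G \<Longrightarrow> length env' = length G \<Longrightarrow>
    (\<And>i. i < length G \<Longrightarrow> (env ! i, env' ! i) \<in> logical_rel (G ! i)) \<Longrightarrow>
    (eval Q env M, eval Q' env' M) \<in> logical_rel T"
proof (induction G M T arbitrary: env env' rule: typing.induct)
  case (T_Var i G)
  then show ?case by simp
next
  case (T_App G s A B t)
  then show ?case by auto
next
  case (T_Lam A G t B)
  have typing: "typing G (Lam A t) (Arr A B)" using T_Lam.hyps by (rule typing.T_Lam)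
  have "env ! i \<in> sdom Q (G ! i)" and "env' ! i \<in> sdom Q' (G ! i)" if "i < length G" for i
    using T_Lam.prems(3)[OF that] logical_rel_subset by blast+
  then have in_sdom: "eval Q env (Lam A t) \<in> sdom Q (Arr A B)"
      "eval Q' env' (Lam A t) \<in> sdom Q' (Arr A B)"
    using eval_in_sdom[OF finite typing] eval_in_sdom[OF finite' typing] T_Lam.prems(1,2)
    by blast+
  have "(app (eval Q env (Lam A t)) x, app (eval Q' env' (Lam A t)) x') \<in> logical_rel B"
    if xx': "(x, x') \<in> logical_rel A" for x x'
  proof -
    have "x \<in> sdom Q A" and "x' \<in> sdom Q' A" using xx' logical_rel_subset by blast+
    then have "app (eval Q env (Lam A t)) x = eval Q (x # env) t"
        and "app (eval Q' env' (Lam A t)) x' = eval Q' (x' # env') t"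
      by (simp_all del: app.simps add: app_Fn_graph finite_sdom finite finite')
    moreover have "(eval Q (x # env) t, eval Q' (x' # env') t) \<in> logical_rel B"
      using T_Lam.prems xx' by (intro T_Lam.IH) (auto simp: nth_Cons split: nat.splits)
    ultimately show ?thesis by simp
  qed
  then show ?case using in_sdom by (simp del: sdom.simps)
qed

lemma interp_logical_rel:
  "M \<in> closed_terms A \<Longrightarrow> (interp Q M, interp Q' M) \<in> logical_rel A"
  unfolding closed_terms_def interp_def by (auto intro: eval_logical_rel)

end

theorem mainTheorem4:
  fixes Q :: "'a set" and Q' :: "'b set" and f :: "('a \<times> 'b) set"
  assumes "finite Q" and "finite Q'" and "partial_surj f Q Q'"
  shows "\<forall>A. Reg Q' A \<subseteq> Reg Q A"
proof (intro allI subsetI)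
  interpret partial_surjection Q Q' f
    using assms by unfold_locales
  fix A S assume "S \<in> Reg Q' A"
  then obtain F' where S: "S = {M \<in> closed_terms A. interp Q' M \<in> F'}"
    unfolding Reg_def by blast
  let ?F = "(logical_rel A)\<inverse> `` F'"
  have "S = {M \<in> closed_terms A. interp Q M \<in> ?F}"
    unfolding S using partial_surj_logical_rel interp_logical_rel unfolding partial_surj_def
    by (intro Collect_eq_Collect_converse_Image) auto
  moreover have "?F \<subseteq> sdom Q A" using logical_rel_subset by blast
  ultimately show "S \<in> Reg Q A" unfolding Reg_def by blast
qed

end
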